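(* Let $(\mathcal{E},\mathcal{L},\mathcal{B})$ be a weakly left resolving labelled space with associated inverse semigroup $S$, let $\alpha\in\mathcal{L}^\infty$ and let $\{\mathcal{F}_n\}_{n\ge0}$ be an admissible family for $\alpha$. For $n\ge0$ define \[\overline{\mathcal{F}}_n=\{A\in\mathcal{B}_{\alpha_{1,n}}:\ r(A,\alpha_{n+1,m})\in\mathcal{F}_m\ \text{for some } m\ge n\}.\] Then: (i) $\mathcal{F}_n\subseteq\overline{\mathcal{F}}_n$ for all $n\ge0$; (ii) $\{\overline{\mathcal{F}}_n\}_{n\ge0}$ is a complete family for $\alpha$; (iii) the filters $\bigcup_{n}\bigcup_{A\in\mathcal{F}_n}\uparrow(\alpha_{1,n},A,\alpha_{1,n})$ and $\bigcup_{n}\bigcup_{A\in\overline{\mathcal{F}}_n}\uparrow(\alpha_{1,n},A,\alpha_{1,n})$ of $E(S)$ coincide; (iv) if $\xi$ denotes this filter, then $\{A\in\mathcal{B}:(\alpha_{1,n},A,\alpha_{1,n})\in\xi\}=\overline{\mathcal{F}}_n$ for all $n\ge0$.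
   Context: A directed graph $\mathcal{E}=(\mathcal{E}^0,\mathcal{E}^1,r,s)$ has countable nonempty vertex set, edge set, range/source maps; paths satisfy $r(\lambda_i)=s(\lambda_{i+1})$. A labelled graph has a surjective labelling $\mathcal{L}:\mathcal{E}^1\to\mathcal{A}$ extended letterwise to finite and infinite paths. $\omega$ is the empty word, $\mathcal{L}^+=\bigcup_{n\ge1}\mathcal{L}(\mathcal{E}^n)$, $\mathcal{L}^*=\{\omega\}\cup\mathcal{L}^+$, $\mathcal{L}^\infty$ the labels of infinite paths; $\alpha_{i,j}=\alpha_i\cdots\alpha_j$ for $i\le j$, $=\omega$ for $j<i$. For $A\subseteq\mathcal{E}^0$, $\alpha\in\mathcal{L}^+$: $r(A,\alpha)=\{r(\lambda):\mathcal{L}(\lambda)=\alpha,\ s(\lambda)\in A\}$, $r(A,\omega)=A$, $r(\alpha)=r(\mathcal{E}^0,\alpha)$. $\mathcal{B}$ accommodating: closed under $r(\cdot,\alpha)$, finite intersections and unions, contains $r(\alpha)$ for $\alpha\in\mathcal{L}^+$; labelled space weakly left resolving if $r(A\cap B,\alpha)=r(A,\alpha)\cap r(B,\alpha)$ for $A,B\in\mathcal{B}$, $\alpha\in\mathcal{L}^+$. $\mathcal{B}_\alpha=\mathcal{B}\cap\mathcal{P}(r(\alpha))$. $S$ = triples $(\alpha,A,\beta)$, $\alpha,\beta\in\mathcal{L}^*$, $\emptyset\ne A\in\mathcal{B}_\alpha\cap\mathcal{B}_\beta$, plus $0$; product $(\alpha,A,\beta)(\gamma,B,\delta)=(\alpha\gamma',r(A,\gamma')\cap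 B,\delta)$ if $\gamma=\beta\gamma'$, $=(\alpha,A\cap r(B,\beta'),\delta\beta')$ if $\beta=\gamma\beta'$, $=0$ otherwise (empty middle entry identified with $0$). $E(S)=\{(\alpha,A,\alpha)\}\cup\{0\}$, $p\le q$ iff $pq=p$; $(\alpha,A,\alpha)\le(\beta,B,\beta)$ iff $\alpha=\beta\alpha'$ and $A\subseteq r(B,\alpha')$; $\uparrow x=\{y:x\le y\}$. Filters in $\mathcal{B}_\alpha$ (under inclusion): nonempty upward-closed subsets not containing $\emptyset$ and closed under finite intersections. A family $\{\mathcal{F}_n\}_{n\ge0}$ with $\mathcal{F}_n$ a filter in $\mathcal{B}_{\alpha_{1,n}}$ for $n>0$ and $\mathcal{F}_0$ a filter in $\mathcal{B}$ or empty is admissible for $\alpha$ if $\mathcal{F}_n\subseteq\{A\in\mathcal{B}_{\alpha_{1,n}}:r(A,\alpha_{n+1})\in\mathcal{F}_{n+1}\}$ for all $n\ge0$, and complete if equality holds for all $n\ge0$. *)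

theory Defs
  imports Main "HOL-Library.Countable_Set"
begin

record ('v, 'e, 'a) lgraph =
  verts :: "'v set"
  edges :: "'e set"
  rng   :: "'e \<Rightarrow> 'v"
  src   :: "'e \<Rightarrow> 'v"
  lab   :: "'e \<Rightarrow> 'a"

text \<open>A directed graph with countable nonempty vertex set and countable edge set.
  The alphabet is the image of the labelling (so the labelling is surjective onto it).\<close>
definition is_graph :: "('v, 'e, 'a) lgraph \<Rightarrow> bool" where
  "is_graph G \<longleftrightarrow> countable (verts G) \<and> verts G \<noteq> {} \<and> countable (edges G)
     \<and> (\<forall>e\<in>edges G. rng G e \<in> verts G \<and> src G e \<in> verts G)"

definition fpath :: "('v, 'e, 'a) lgraph \<Rightarrow> 'e list \<Rightarrow> bool" where
  "fpath G p \<longleftrightarrow> set p \<subseteq> edges G \<and>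
     (\<forall>i. Suc i < length p \<longrightarrow> rng G (p ! i) = src G (p ! Suc i))"

definition Lplus :: "('v, 'e, 'a) lgraph \<Rightarrow> 'a list set" where
  "Lplus G = {map (lab G) p | p. fpath G p \<and> p \<noteq> []}"

definition Lstar :: "('v, 'e, 'a) lgraph \<Rightarrow> 'a list set" where
  "Lstar G = insert [] (Lplus G)"

text \<open>Labels of infinite paths; an infinite word is a function nat => 'a,
  where index i (0-based) corresponds to the letter alpha_{i+1}.\<close>
definition Linf :: "('v, 'e, 'a) lgraph \<Rightarrow> (nat \<Rightarrow> 'a) set" where
  "Linf G = {\<alpha>. \<exists>p. (\<forall>i. p i \<in> edges G \<and> rng G (p i) = src G (p (Suc i)))
                     \<and> (\<forall>i. \<alpha> i = lab G (p i))}"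

definition rlab :: "('v, 'e, 'a) lgraph \<Rightarrow> 'v set \<Rightarrow> 'a list \<Rightarrow> 'v set" where
  "rlab G A w = (if w = [] then A else
     {rng G (last p) | p. fpath G p \<and> p \<noteq> [] \<and> map (lab G) p = w \<and> src G (hd p) \<in> A})"

definition rword :: "('v, 'e, 'a) lgraph \<Rightarrow> 'a list \<Rightarrow> 'v set" where
  "rword G w = rlab G (verts G) w"

definition accommodating :: "('v, 'e, 'a) lgraph \<Rightarrow> 'v set set \<Rightarrow> bool" where
  "accommodating G \<B> \<longleftrightarrow> \<B> \<subseteq> Pow (verts G)
     \<and> (\<forall>A\<in>\<B>. \<forall>w\<in>Lplus G. rlab G A w \<in> \<B>)
     \<and> (\<forall>A\<in>\<B>. \<forall>B\<in>\<B>. A \<inter> B \<in> \<B> \<and> A \<union> B \<in> \<B>)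
     \<and> (\<forall>w\<in>Lplus G. rword G w \<in> \<B>)"

definition labelled_space :: "('v, 'e, 'a) lgraph \<Rightarrow> 'v set set \<Rightarrow> bool" where
  "labelled_space G \<B> \<longleftrightarrow> is_graph G \<and> accommodating G \<B>"

definition weakly_left_resolving :: "('v, 'e, 'a) lgraph \<Rightarrow> 'v set set \<Rightarrow> bool" where
  "weakly_left_resolving G \<B> \<longleftrightarrow>
     (\<forall>A\<in>\<B>. \<forall>B\<in>\<B>. \<forall>w\<in>Lplus G. rlab G (A \<inter> B) w = rlab G A w \<inter> rlab G B w)"

definition Bsub :: "('v, 'e, 'a) lgraph \<Rightarrow> 'v set set \<Rightarrow> 'a list \<Rightarrow> 'v set set" where
  "Bsub G \<B> w = {A \<in> \<B>. A \<subseteq> rword G w}"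

definition pre :: "(nat \<Rightarrow> 'a) \<Rightarrow> nat \<Rightarrow> 'a list" where
  "pre \<alpha> n = map \<alpha> [0..<n]"

definition seg :: "(nat \<Rightarrow> 'a) \<Rightarrow> nat \<Rightarrow> nat \<Rightarrow> 'a list" where
  "seg \<alpha> n m = map \<alpha> [n..<m]"

definition is_filter_in :: "'v set set \<Rightarrow> 'v set set \<Rightarrow> bool" where
  "is_filter_in X F \<longleftrightarrow> F \<subseteq> X \<and> F \<noteq> {} \<and> {} \<notin> F
     \<and> (\<forall>A\<in>F. \<forall>B\<in>X. A \<subseteq> B \<longrightarrow> B \<in> F)
     \<and> (\<forall>A\<in>F. \<forall>B\<in>F. A \<inter> B \<in> F)"

definition family_filters :: "('v, 'e, 'a) lgraph \<Rightarrow> 'v set set \<Rightarrow> (nat \<Rightarrow> 'a) \<Rightarrow> (nat \<Rightarrow> 'v set set) \<Rightarrow> bool" where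
  "family_filters G \<B> \<alpha> F \<longleftrightarrow> (F 0 = {} \<or> is_filter_in \<B> (F 0))
     \<and> (\<forall>n>0. is_filter_in (Bsub G \<B> (pre \<alpha> n)) (F n))"

definition admissible :: "('v, 'e, 'a) lgraph \<Rightarrow> 'v set set \<Rightarrow> (nat \<Rightarrow> 'a) \<Rightarrow> (nat \<Rightarrow> 'v set set) \<Rightarrow> bool" where
  "admissible G \<B> \<alpha> F \<longleftrightarrow> family_filters G \<B> \<alpha> F
     \<and> (\<forall>n. F n \<subseteq> {A \<in> Bsub G \<B> (pre \<alpha> n). rlab G A [\<alpha> n] \<in> F (Suc n)})"

definition complete_family :: "('v, 'e, 'a) lgraph \<Rightarrow> 'v set set \<Rightarrow> (nat \<Rightarrow> 'a) \<Rightarrow> (nat \<Rightarrow> 'v set set) \<Rightarrow> bool" where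
  "complete_family G \<B> \<alpha> F \<longleftrightarrow> family_filters G \<B> \<alpha> F
     \<and> (\<forall>n. F n = {A \<in> Bsub G \<B> (pre \<alpha> n). rlab G A [\<alpha> n] \<in> F (Suc n)})"

definition Fbar :: "('v, 'e, 'a) lgraph \<Rightarrow> 'v set set \<Rightarrow> (nat \<Rightarrow> 'a) \<Rightarrow> (nat \<Rightarrow> 'v set set) \<Rightarrow> nat \<Rightarrow> 'v set set" where
  "Fbar G \<B> \<alpha> F n = {A \<in> Bsub G \<B> (pre \<alpha> n). \<exists>m\<ge>n. rlab G A (seg \<alpha> n m) \<in> F m}"

text \<open>Elements of S: None is the zero, Some (a, A, b) the triple (a, A, b).\<close>
type_synonym ('v, 'a) selt = "('a list \<times> 'v set \<times> 'a list) option"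

definition S_set :: "('v, 'e, 'a) lgraph \<Rightarrow> 'v set set \<Rightarrow> ('v, 'a) selt set" where
  "S_set G \<B> = insert None {Some (a, A, b) | a A b. a \<in> Lstar G \<and> b \<in> Lstar G \<and> A \<noteq> {}
      \<and> A \<in> Bsub G \<B> a \<and> A \<in> Bsub G \<B> b}"

fun smult :: "('v, 'e, 'a) lgraph \<Rightarrow> ('v, 'a) selt \<Rightarrow> ('v, 'a) selt \<Rightarrow> ('v, 'a) selt" where
  "smult G (Some (a, A, b)) (Some (c, B, d)) =
     (if take (length b) c = b then
        (let c' = drop (length b) c; M = rlab G A c' \<inter> B in
          if M = {} then None else Some (a @ c', M, d))
      else if take (length c) b = c then
        (let b' = drop (length c) b; M = A \<inter> rlab G B b' in
          if M = {} then None else Some (a, M, d @ b'))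
      else None)"
| "smult G _ _ = None"

definition ES :: "('v, 'e, 'a) lgraph \<Rightarrow> 'v set set \<Rightarrow> ('v, 'a) selt set" where
  "ES G \<B> = insert None {Some (a, A, a) | a A. a \<in> Lstar G \<and> A \<noteq> {} \<and> A \<in> Bsub G \<B> a}"

definition sleq :: "('v, 'e, 'a) lgraph \<Rightarrow> ('v, 'a) selt \<Rightarrow> ('v, 'a) selt \<Rightarrow> bool" where
  "sleq G p q \<longleftrightarrow> smult G p q = p"

definition upE :: "('v, 'e, 'a) lgraph \<Rightarrow> 'v set set \<Rightarrow> ('v, 'a) selt \<Rightarrow> ('v, 'a) selt set" where
  "upE G \<B> x = {y \<in> ES G \<B>. sleq G x y}"

definition xi_of :: "('v, 'e, 'a) lgraph \<Rightarrow> 'v set set \<Rightarrow> (nat \<Rightarrow> 'a) \<Rightarrow> (nat \<Rightarrow> 'v set set) \<Rightarrow> ('v, 'a) selt set" where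
  "xi_of G \<B> \<alpha> F = (\<Union>n. \<Union>A\<in>F n. upE G \<B> (Some (pre \<alpha> n, A, pre \<alpha> n)))"

end

theory Submission
  imports Defs
begin

text \<open>Admissibility pushes membership forward along \<open>\<alpha>\<close>: if \<open>r(A, \<alpha>[n+1..m]) \<in> F m\<close>
  then \<open>r(A, \<alpha>[n+1..k]) \<in> F k\<close> for every \<open>k \<ge> m\<close>. So the witness index in the definition
  of \<open>Fbar n\<close> can be enlarged at will; two members of \<open>Fbar n\<close> then have witnesses at a
  common index, and weak left resolvingness makes their intersection a member as well.
  Completeness of \<open>Fbar\<close> amounts to splitting off the first letter of \<open>\<alpha>[n+1..m]\<close>.
  For the filters in \<open>E(S)\<close>: whenever \<open>B = r(A, \<alpha>[n+1..m]) \<in> F m\<close>, the idempotent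
  \<open>(\<alpha>[1..m], B, \<alpha>[1..m])\<close> lies below \<open>(\<alpha>[1..n], A, \<alpha>[1..n])\<close>, so every generator
  coming from \<open>Fbar\<close> lies above one coming from \<open>F\<close>.\<close>

lemma fpath_Nil [simp]: "fpath G []"
  by (simp add: fpath_def)

lemma fpath_Cons:
  "fpath G (e # p) \<longleftrightarrow> e \<in> edges G \<and> fpath G p \<and> (p \<noteq> [] \<longrightarrow> rng G e = src G (hd p))"
proof -
  have "(\<forall>i. Suc i < length (e # p) \<longrightarrow> rng G ((e # p) ! i) = src G ((e # p) ! Suc i)) \<longleftrightarrow>
     (p \<noteq> [] \<longrightarrow> rng G e = src G (hd p)) \<and> (\<forall>i. Suc i < length p \<longrightarrow> rng G (p ! i) = src G (p ! Suc i))"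
    (is "?L \<longleftrightarrow> ?R")
  proof
    assume L: ?L
    show ?R
    proof
      show "p \<noteq> [] \<longrightarrow> rng G e = src G (hd p)"
        using L[rule_format, of 0] by (cases p) auto
      show "\<forall>i. Suc i < length p \<longrightarrow> rng G (p ! i) = src G (p ! Suc i)"
        using L by (metis Suc_less_eq length_Cons nth_Cons_Suc)
    qed
  next
    assume ?R
    then show ?L
      by (intro allI impI, case_tac i) (auto simp: hd_conv_nth)
  qed
  then show ?thesis
    unfolding fpath_def by auto
qed

lemma fpath_append:
  "fpath G (p @ q) \<longleftrightarrow> fpath G p \<and> fpath G q \<and> (p \<noteq> [] \<and> q \<noteq> [] \<longrightarrow> rng G (last p) = src G (hd q))"
  by (induction p) (auto simp: fpath_Cons)

lemma rlab_Nil [simp]: "rlab G A [] = A"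
  by (simp add: rlab_def)

lemma rlab_empty [simp]: "rlab G {} w = {}"
  by (simp add: rlab_def)

lemma rlab_mono: "A \<subseteq> B \<Longrightarrow> rlab G A w \<subseteq> rlab G B w"
  unfolding rlab_def by auto

lemma rlab_append: "rlab G A (u @ v) = rlab G (rlab G A u) v"
proof (cases "u = [] \<or> v = []")
  case True
  then show ?thesis by auto
next
  case False
  then have u: "u \<noteq> []" and v: "v \<noteq> []" by auto
  show ?thesis
  proof
    show "rlab G A (u @ v) \<subseteq> rlab G (rlab G A u) v"
    proof
      fix x assume "x \<in> rlab G A (u @ v)"
      then obtain r where r: "fpath G r" "r \<noteq> []" "map (lab G) r = u @ v" "src G (hd r) \<in> A"
          "x = rng G (last r)"
        using u unfolding rlab_def by auto
      define p where "p = take (length u) r"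
      define q where "q = drop (length u) r"
      have "length r = length u + length v"
        using r(3) by (metis length_append length_map)
      then have ne: "p \<noteq> []" "q \<noteq> []"
        using u v unfolding p_def q_def by auto
      have labels: "map (lab G) p = u" "map (lab G) q = v"
        using r(3) unfolding p_def q_def
        by (metis append_eq_conv_conj take_map, metis append_eq_conv_conj drop_map)
      have r_split: "r = p @ q"
        unfolding p_def q_def by simp
      with r(1) ne have paths: "fpath G p" "fpath G q" "rng G (last p) = src G (hd q)"
        by (auto simp: fpath_append)
      have "rng G (last p) \<in> rlab G A u"
        unfolding rlab_def using u paths ne labels r(4) r_split by (auto intro!: exI[of _ p])
      then have "src G (hd q) \<in> rlab G A u"
        using paths(3) by simp
      moreover have "x = rng G (last q)"
        using r(5) r_split ne by simp
      moreover have "rlab G (rlab G A u) v = {rng G (last q) | q. fpath G q \<and> q \<noteq> []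
          \<and> map (lab G) q = v \<and> src G (hd q) \<in> rlab G A u}"
        using v by (simp add: rlab_def)
      ultimately show "x \<in> rlab G (rlab G A u) v"
        using paths(2) ne(2) labels(2) by blast
    qed
    show "rlab G (rlab G A u) v \<subseteq> rlab G A (u @ v)"
    proof
      fix x assume "x \<in> rlab G (rlab G A u) v"
      then obtain q where q: "fpath G q" "q \<noteq> []" "map (lab G) q = v" "src G (hd q) \<in> rlab G A u"
          "x = rng G (last q)"
        using v unfolding rlab_def by auto
      then obtain p where p: "fpath G p" "p \<noteq> []" "map (lab G) p = u" "src G (hd p) \<in> A"
          "src G (hd q) = rng G (last p)"
        using u unfolding rlab_def by auto
      have "fpath G (p @ q)"
        using p q by (simp add: fpath_append)
      then show "x \<in> rlab G A (u @ v)"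
        unfolding rlab_def using p q u by (auto intro!: exI[of _ "p @ q"])
    qed
  qed
qed

lemma seg_self [simp]: "seg \<alpha> n n = []"
  by (simp add: seg_def)

lemma pre_eq_seg: "pre \<alpha> n = seg \<alpha> 0 n"
  by (simp add: pre_def seg_def)

lemma length_pre [simp]: "length (pre \<alpha> n) = n"
  by (simp add: pre_def)

lemma pre_append_seg: "n \<le> m \<Longrightarrow> pre \<alpha> m = pre \<alpha> n @ seg \<alpha> n m"
  unfolding pre_def seg_def by (metis le_add_diff_inverse map_append upt_add_eq_append zero_le)

lemma seg_Suc_right: "n \<le> k \<Longrightarrow> seg \<alpha> n (Suc k) = seg \<alpha> n k @ [\<alpha> k]"
  by (simp add: seg_def)

lemma seg_Suc_left: "n < m \<Longrightarrow> seg \<alpha> n m = \<alpha> n # seg \<alpha> (Suc n) m"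
  by (simp add: seg_def upt_conv_Cons)

lemma seg_in_Lstar:
  assumes "\<alpha> \<in> Linf G"
  shows "seg \<alpha> n m \<in> Lstar G"
proof (cases "n < m")
  case False
  then show ?thesis by (simp add: seg_def Lstar_def)
next
  case True
  obtain p where p: "\<And>i. p i \<in> edges G \<and> rng G (p i) = src G (p (Suc i))" "\<And>i. \<alpha> i = lab G (p i)"
    using assms unfolding Linf_def by auto
  have "fpath G (map p [n..<m])"
    using p(1) unfolding fpath_def by auto
  moreover have "map (lab G) (map p [n..<m]) = seg \<alpha> n m"
    unfolding seg_def using p(2) by simp
  ultimately have "seg \<alpha> n m \<in> Lplus G"
    unfolding Lplus_def using True by (auto intro!: exI[of _ "map p [n..<m]"])
  then show ?thesis
    by (simp add: Lstar_def)
qed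

lemma pre_in_Lstar: "\<alpha> \<in> Linf G \<Longrightarrow> pre \<alpha> n \<in> Lstar G"
  by (simp add: pre_eq_seg seg_in_Lstar)

lemma rlab_in_accommodating:
  "accommodating G \<B> \<Longrightarrow> A \<in> \<B> \<Longrightarrow> w \<in> Lstar G \<Longrightarrow> rlab G A w \<in> \<B>"
  unfolding accommodating_def Lstar_def by auto

lemma weakly_left_resolving_Lstar:
  "weakly_left_resolving G \<B> \<Longrightarrow> A \<in> \<B> \<Longrightarrow> B \<in> \<B> \<Longrightarrow> w \<in> Lstar G
    \<Longrightarrow> rlab G (A \<inter> B) w = rlab G A w \<inter> rlab G B w"
  unfolding weakly_left_resolving_def Lstar_def by auto

lemma Bsub_Nil: "accommodating G \<B> \<Longrightarrow> Bsub G \<B> [] = \<B>"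
  unfolding Bsub_def rword_def accommodating_def by auto

lemma Bsub_Int: "accommodating G \<B> \<Longrightarrow> A \<in> Bsub G \<B> w \<Longrightarrow> B \<in> Bsub G \<B> w \<Longrightarrow> A \<inter> B \<in> Bsub G \<B> w"
  unfolding Bsub_def accommodating_def by auto

lemma rlab_seg_in_Bsub:
  assumes "accommodating G \<B>" "\<alpha> \<in> Linf G" "A \<in> Bsub G \<B> (pre \<alpha> n)" "n \<le> m"
  shows "rlab G A (seg \<alpha> n m) \<in> Bsub G \<B> (pre \<alpha> m)"
proof -
  have "rlab G A (seg \<alpha> n m) \<in> \<B>"
    using assms rlab_in_accommodating seg_in_Lstar unfolding Bsub_def by blast
  moreover have "rlab G A (seg \<alpha> n m) \<subseteq> rlab G (rword G (pre \<alpha> n)) (seg \<alpha> n m)"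
    using assms(3) unfolding Bsub_def by (simp add: rlab_mono)
  moreover have "rlab G (rword G (pre \<alpha> n)) (seg \<alpha> n m) = rword G (pre \<alpha> m)"
    unfolding rword_def pre_append_seg[OF assms(4)] rlab_append ..
  ultimately show ?thesis
    unfolding Bsub_def by simp
qed

lemma sleq_None: "\<not> sleq G (Some x) None"
  unfolding sleq_def by (cases x) auto

lemma sleq_idempotents_iff:
  assumes "A \<noteq> {}"
  shows "sleq G (Some (a, A, a)) (Some (c, C, c)) \<longleftrightarrow> (\<exists>a'. a = c @ a' \<and> A \<subseteq> rlab G C a')"
proof (cases "take (length a) c = a")
  case True
  then obtain c' where c: "c = a @ c'"
    by (metis append_take_drop_id)
  have "smult G (Some (a, A, a)) (Some (c, C, c)) =
      (if rlab G A c' \<inter> C = {} then None else Some (a @ c', rlab G A c' \<inter> C, c))"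
    using c by (simp add: Let_def)
  then show ?thesis
    unfolding sleq_def using c assms by (cases "c' = []") auto
next
  case False
  show ?thesis
  proof (cases "take (length c) a = c")
    case True
    then obtain a' where a: "a = c @ a'"
      by (metis append_take_drop_id)
    have "smult G (Some (a, A, a)) (Some (c, C, c)) =
        (if A \<inter> rlab G C a' = {} then None else Some (a, A \<inter> rlab G C a', c @ a'))"
      using a False by (simp add: Let_def)
    then show ?thesis
      unfolding sleq_def using a assms by auto
  next
    case False': False
    then show ?thesis
      unfolding sleq_def using False by auto
  qed
qed

lemma upE_SomeE:
  assumes "y \<in> upE G \<B> (Some x)"
  obtains c C where "y = Some (c, C, c)" "sleq G (Some x) y" "C \<in> Bsub G \<B> c"
  using assms sleq_None[of G x] unfolding upE_def ES_def by auto

lemma upE_self: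
  assumes "a \<in> Lstar G" "A \<noteq> {}" "A \<in> Bsub G \<B> a"
  shows "Some (a, A, a) \<in> upE G \<B> (Some (a, A, a))"
proof -
  have "sleq G (Some (a, A, a)) (Some (a, A, a))"
    using sleq_idempotents_iff[OF assms(2)] by (metis append_Nil2 rlab_Nil subset_refl)
  then show ?thesis
    using assms unfolding upE_def ES_def by auto
qed

context
  fixes G :: "('v, 'e, 'a) lgraph" and \<B> :: "'v set set"
    and \<alpha> :: "nat \<Rightarrow> 'a" and F :: "nat \<Rightarrow> 'v set set"
  assumes accommodating: "accommodating G \<B>"
    and label: "\<alpha> \<in> Linf G"
    and admissible: "admissible G \<B> \<alpha> F"
begin

lemma admissible_filter_or_empty: "F m = {} \<or> is_filter_in (Bsub G \<B> (pre \<alpha> m)) (F m)"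
  using admissible Bsub_Nil[OF accommodating]
  unfolding admissible_def family_filters_def by (cases m) (auto simp: pre_def)

lemma admissible_in_Bsub: "X \<in> F m \<Longrightarrow> X \<in> Bsub G \<B> (pre \<alpha> m)"
  using admissible_filter_or_empty[of m] unfolding is_filter_in_def by auto

lemma admissible_nonempty_members: "{} \<notin> F m"
  using admissible_filter_or_empty[of m] unfolding is_filter_in_def by auto

lemma admissible_upward: "X \<in> F m \<Longrightarrow> Y \<in> Bsub G \<B> (pre \<alpha> m) \<Longrightarrow> X \<subseteq> Y \<Longrightarrow> Y \<in> F m"
  using admissible_filter_or_empty[of m] unfolding is_filter_in_def by auto

lemma admissible_Int: "X \<in> F m \<Longrightarrow> Y \<in> F m \<Longrightarrow> X \<inter> Y \<in> F m"
  using admissible_filter_or_empty[of m] unfolding is_filter_in_def by auto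

lemma admissible_rlab_seg:
  assumes "n \<le> m" "m \<le> k" "rlab G A (seg \<alpha> n m) \<in> F m"
  shows "rlab G A (seg \<alpha> n k) \<in> F k"
  using assms(2)
proof (induction k rule: dec_induct)
  case base
  then show ?case using assms(3) .
next
  case (step k)
  then have "rlab G (rlab G A (seg \<alpha> n k)) [\<alpha> k] \<in> F (Suc k)"
    using admissible unfolding admissible_def by blast
  then show ?case
    using assms(1) step(1) by (simp add: seg_Suc_right rlab_append)
qed

lemma FbarE_ge:
  assumes "A \<in> Fbar G \<B> \<alpha> F n"
  obtains m where "k \<le> m" "n \<le> m" "rlab G A (seg \<alpha> n m) \<in> F m"
proof -
  obtain m where m: "n \<le> m" "rlab G A (seg \<alpha> n m) \<in> F m"
    using assms unfolding Fbar_def by auto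
  have "rlab G A (seg \<alpha> n (max m k)) \<in> F (max m k)"
    using admissible_rlab_seg[OF m(1) _ m(2)] by simp
  with m(1) show ?thesis
    using that[of "max m k"] by simp
qed

lemma admissible_subset_Fbar: "F n \<subseteq> Fbar G \<B> \<alpha> F n"
  unfolding Fbar_def using admissible_in_Bsub by (auto intro!: exI[of _ n])

lemma Fbar_in_Bsub: "A \<in> Fbar G \<B> \<alpha> F n \<Longrightarrow> A \<in> Bsub G \<B> (pre \<alpha> n)"
  unfolding Fbar_def by auto

lemma Fbar_nonempty_members: "{} \<notin> Fbar G \<B> \<alpha> F n"
  unfolding Fbar_def using admissible_nonempty_members by auto

lemma Fbar_upward:
  assumes "A \<in> Fbar G \<B> \<alpha> F n" "B \<in> Bsub G \<B> (pre \<alpha> n)" "A \<subseteq> B"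
  shows "B \<in> Fbar G \<B> \<alpha> F n"
proof -
  obtain m where m: "n \<le> m" "rlab G A (seg \<alpha> n m) \<in> F m"
    using assms(1) unfolding Fbar_def by auto
  have "rlab G B (seg \<alpha> n m) \<in> F m"
    using admissible_upward[OF m(2) rlab_seg_in_Bsub[OF accommodating label assms(2) m(1)]]
      rlab_mono[OF assms(3)] .
  then show ?thesis
    using assms(2) m(1) unfolding Fbar_def by auto
qed

lemma Fbar_Int:
  assumes "weakly_left_resolving G \<B>" "A \<in> Fbar G \<B> \<alpha> F n" "B \<in> Fbar G \<B> \<alpha> F n"
  shows "A \<inter> B \<in> Fbar G \<B> \<alpha> F n"
proof -
  obtain m\<^sub>A where mA: "n \<le> m\<^sub>A" "rlab G A (seg \<alpha> n m\<^sub>A) \<in> F m\<^sub>A"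
    using assms(2) unfolding Fbar_def by auto
  obtain m where m: "m\<^sub>A \<le> m" "n \<le> m" "rlab G B (seg \<alpha> n m) \<in> F m"
    using FbarE_ge[OF assms(3)] by blast
  have "rlab G A (seg \<alpha> n m) \<in> F m"
    using admissible_rlab_seg[OF mA(1) m(1) mA(2)] .
  moreover have "A \<in> \<B>" "B \<in> \<B>"
    using assms(2,3) Fbar_in_Bsub unfolding Bsub_def by auto
  ultimately have "rlab G (A \<inter> B) (seg \<alpha> n m) \<in> F m"
    using admissible_Int[OF _ m(3)]
      weakly_left_resolving_Lstar[OF assms(1) _ _ seg_in_Lstar[OF label]] by simp
  moreover have "A \<inter> B \<in> Bsub G \<B> (pre \<alpha> n)"
    using assms(2,3) Fbar_in_Bsub Bsub_Int[OF accommodating] by blast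
  ultimately show ?thesis
    using m(2) unfolding Fbar_def by blast
qed

lemma Fbar_step:
  "Fbar G \<B> \<alpha> F n = {A \<in> Bsub G \<B> (pre \<alpha> n). rlab G A [\<alpha> n] \<in> Fbar G \<B> \<alpha> F (Suc n)}"
proof -
  have split: "rlab G A (seg \<alpha> n m) = rlab G (rlab G A [\<alpha> n]) (seg \<alpha> (Suc n) m)"
    if "Suc n \<le> m" for A m
    using that by (simp add: seg_Suc_left rlab_append[symmetric])
  have step_in_Bsub: "rlab G A [\<alpha> n] \<in> Bsub G \<B> (pre \<alpha> (Suc n))"
    if "A \<in> Bsub G \<B> (pre \<alpha> n)" for A
    using rlab_seg_in_Bsub[OF accommodating label that, of "Suc n"] by (simp add: seg_Suc_left)
  show ?thesis
  proof (intro equalityI subsetI)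
    fix A assume A: "A \<in> Fbar G \<B> \<alpha> F n"
    then obtain m where "Suc n \<le> m" "rlab G A (seg \<alpha> n m) \<in> F m"
      by (rule FbarE_ge)
    then show "A \<in> {A \<in> Bsub G \<B> (pre \<alpha> n). rlab G A [\<alpha> n] \<in> Fbar G \<B> \<alpha> F (Suc n)}"
      using Fbar_in_Bsub[OF A] step_in_Bsub split unfolding Fbar_def by auto
  next
    fix A assume "A \<in> {A \<in> Bsub G \<B> (pre \<alpha> n). rlab G A [\<alpha> n] \<in> Fbar G \<B> \<alpha> F (Suc n)}"
    then show "A \<in> Fbar G \<B> \<alpha> F n"
      using split unfolding Fbar_def by (auto simp del: rlab_Nil) (metis Suc_leD)
  qed
qed

lemma Fbar_complete_family:
  assumes "weakly_left_resolving G \<B>"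
  shows "complete_family G \<B> \<alpha> (Fbar G \<B> \<alpha> F)"
proof -
  have filter: "is_filter_in (Bsub G \<B> (pre \<alpha> n)) (Fbar G \<B> \<alpha> F n)"
    if "Fbar G \<B> \<alpha> F n \<noteq> {}" for n
    unfolding is_filter_in_def
    using that Fbar_in_Bsub Fbar_nonempty_members Fbar_upward Fbar_Int[OF assms] by blast
  have "F n \<noteq> {}" if "n > 0" for n
    using that admissible unfolding admissible_def family_filters_def is_filter_in_def by auto
  then have "Fbar G \<B> \<alpha> F n \<noteq> {}" if "n > 0" for n
    using that admissible_subset_Fbar by blast
  moreover have "pre \<alpha> 0 = []"
    by (simp add: pre_def)
  ultimately have "family_filters G \<B> \<alpha> (Fbar G \<B> \<alpha> F)"
    unfolding family_filters_def using filter Bsub_Nil[OF accommodating] by metis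
  then show ?thesis
    unfolding complete_family_def using Fbar_step by blast
qed

lemma xi_of_Fbar: "xi_of G \<B> \<alpha> (Fbar G \<B> \<alpha> F) = xi_of G \<B> \<alpha> F"
proof
  show "xi_of G \<B> \<alpha> F \<subseteq> xi_of G \<B> \<alpha> (Fbar G \<B> \<alpha> F)"
    unfolding xi_of_def using admissible_subset_Fbar by blast
  show "xi_of G \<B> \<alpha> (Fbar G \<B> \<alpha> F) \<subseteq> xi_of G \<B> \<alpha> F"
  proof
    fix y assume "y \<in> xi_of G \<B> \<alpha> (Fbar G \<B> \<alpha> F)"
    then obtain n A where A: "A \<in> Fbar G \<B> \<alpha> F n"
        and y: "y \<in> upE G \<B> (Some (pre \<alpha> n, A, pre \<alpha> n))"
      unfolding xi_of_def by auto
    obtain m where m: "n \<le> m" "rlab G A (seg \<alpha> n m) \<in> F m"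
      using A unfolding Fbar_def by auto
    obtain c C where y_eq: "y = Some (c, C, c)" and below: "sleq G (Some (pre \<alpha> n, A, pre \<alpha> n)) y"
      using y by (rule upE_SomeE)
    have "A \<noteq> {}"
      using A Fbar_nonempty_members by auto
    then obtain a' where a': "pre \<alpha> n = c @ a'" "A \<subseteq> rlab G C a'"
      using below unfolding y_eq by (auto simp: sleq_idempotents_iff)
    define B where "B = rlab G A (seg \<alpha> n m)"
    have "pre \<alpha> m = c @ (a' @ seg \<alpha> n m)"
      using pre_append_seg[OF m(1), of \<alpha>] a'(1) by simp
    moreover have "B \<subseteq> rlab G C (a' @ seg \<alpha> n m)"
      unfolding B_def rlab_append using rlab_mono[OF a'(2)] .
    moreover have "B \<noteq> {}"
      using m(2) admissible_nonempty_members unfolding B_def by auto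
    ultimately have "sleq G (Some (pre \<alpha> m, B, pre \<alpha> m)) y"
      unfolding y_eq by (auto simp: sleq_idempotents_iff)
    then have "y \<in> upE G \<B> (Some (pre \<alpha> m, B, pre \<alpha> m))"
      using y unfolding upE_def by auto
    then show "y \<in> xi_of G \<B> \<alpha> F"
      using m(2) unfolding xi_of_def B_def by blast
  qed
qed

lemma xi_of_slice_eq_Fbar: "{A \<in> \<B>. Some (pre \<alpha> n, A, pre \<alpha> n) \<in> xi_of G \<B> \<alpha> F} = Fbar G \<B> \<alpha> F n"
proof (intro equalityI subsetI)
  fix A assume "A \<in> {A \<in> \<B>. Some (pre \<alpha> n, A, pre \<alpha> n) \<in> xi_of G \<B> \<alpha> F}"
  then obtain k D where D: "D \<in> F k"
      and up: "Some (pre \<alpha> n, A, pre \<alpha> n) \<in> upE G \<B> (Some (pre \<alpha> k, D, pre \<alpha> k))"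
    unfolding xi_of_def by auto
  then have A: "A \<in> Bsub G \<B> (pre \<alpha> n)"
    by (auto elim: upE_SomeE)
  have "D \<noteq> {}"
    using D admissible_nonempty_members by auto
  moreover have "sleq G (Some (pre \<alpha> k, D, pre \<alpha> k)) (Some (pre \<alpha> n, A, pre \<alpha> n))"
    using up unfolding upE_def by auto
  ultimately obtain a' where a': "pre \<alpha> k = pre \<alpha> n @ a'" "D \<subseteq> rlab G A a'"
    by (auto simp: sleq_idempotents_iff)
  have nk: "n \<le> k"
    using arg_cong[OF a'(1), of length] by simp
  then have "a' = seg \<alpha> n k"
    using a'(1) pre_append_seg[OF nk, of \<alpha>] by (metis same_append_eq)
  then have "rlab G A (seg \<alpha> n k) \<in> F k"
    using admissible_upward[OF D rlab_seg_in_Bsub[OF accommodating label A nk]] a'(2) by simp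
  then show "A \<in> Fbar G \<B> \<alpha> F n"
    using A nk unfolding Fbar_def by auto
next
  fix A assume A: "A \<in> Fbar G \<B> \<alpha> F n"
  then have "Some (pre \<alpha> n, A, pre \<alpha> n) \<in> upE G \<B> (Some (pre \<alpha> n, A, pre \<alpha> n))"
    using upE_self[OF pre_in_Lstar[OF label]] Fbar_nonempty_members Fbar_in_Bsub by metis
  then have "Some (pre \<alpha> n, A, pre \<alpha> n) \<in> xi_of G \<B> \<alpha> F"
    using A xi_of_Fbar unfolding xi_of_def by blast
  then show "A \<in> {A \<in> \<B>. Some (pre \<alpha> n, A, pre \<alpha> n) \<in> xi_of G \<B> \<alpha> F}"
    using Fbar_in_Bsub[OF A] unfolding Bsub_def by auto
qed

end

theorem mainTheorem10:
  fixes G :: "('v, 'e, 'a) lgraph" and \<B> :: "'v set set"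
    and \<alpha> :: "nat \<Rightarrow> 'a" and F :: "nat \<Rightarrow> 'v set set"
  assumes "labelled_space G \<B>"
    and "weakly_left_resolving G \<B>"
    and "\<alpha> \<in> Linf G"
    and "admissible G \<B> \<alpha> F"
  shows "(\<forall>n. F n \<subseteq> Fbar G \<B> \<alpha> F n)
    \<and> complete_family G \<B> \<alpha> (Fbar G \<B> \<alpha> F)
    \<and> xi_of G \<B> \<alpha> F = xi_of G \<B> \<alpha> (Fbar G \<B> \<alpha> F)
    \<and> (\<forall>n. {A \<in> \<B>. Some (pre \<alpha> n, A, pre \<alpha> n) \<in> xi_of G \<B> \<alpha> F} = Fbar G \<B> \<alpha> F n)"
proof -
  have accommodating: "accommodating G \<B>"
    using assms(1) by (simp add: labelled_space_def)
  note setting = accommodating assms(3,4)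
  show ?thesis
    using admissible_subset_Fbar[OF setting] Fbar_complete_family[OF setting assms(2)]
      xi_of_Fbar[OF setting] xi_of_slice_eq_Fbar[OF setting]
    by simp
qed

end
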